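(* Let $c,d\in\mathbb{N}$, $I=\mathbb{N}^d\times[c]$, $I_n=[n]^d\times[c]$, let $L\subseteq\mathbb{Z}^{(I)}$ be a lattice and $L_n=L\cap\mathbb{Z}^{(I_n)}$ for $n\ge1$. (i) If for every $n\ge1$, $\mathcal{B}_n\subseteq L_n$ is a generating set (respectively Markov basis, universal Gröbner basis, Graver basis) of $L_n$, then $\mathcal{B}=\bigcup_{n\ge1}\mathcal{B}_n$ is a generating set (respectively Markov basis, universal Gröbner basis, Graver basis) of $L$. Also, if $\prec$ is a term order on $\mathbb{Z}_{\ge0}^{(I)}$ and each $\mathcal{B}_n$ is a Gröbner basis of $L_n$ with respect to the restriction of $\prec$ to $\mathbb{Z}_{\ge0}^{(I_n)}$, then $\mathcal{B}$ is a Gröbner basis of $L$ with respect to $\prec$. (ii) If $\mathcal{G}$ is the Graver basis of $L$, then $\mathcal{G}\cap\mathbb{Z}^{(I_n)}$ is the Graver basis of $L_n$ for all $n\ge1$.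
   Context: $\mathbb{N}=\{1,2,\dots\}$. For a set $J$, $\mathbb{Z}^{(J)}$ is the free abelian group with basis $J$, $\mathbb{Z}_{\ge0}^{(J)}$ its nonnegative vectors; $\mathbb{Z}^{(I_n)}\subseteq\mathbb{Z}^{(I)}$ by extension by zero; a lattice is a subgroup. $\mathbf{u}\sqsubseteq\mathbf{v}$ iff $u_jv_j\ge0$ and $|u_j|\le|v_j|$ for all $j$. A term order is an additive well-ordering of $\mathbb{Z}_{\ge0}^{(J)}$. For a lattice $L\subseteq\mathbb{Z}^{(J)}$ and $\mathbf{u}\in\mathbb{Z}_{\ge0}^{(J)}$, $F_L(\mathbf{u})=\{\mathbf{v}\in\mathbb{Z}_{\ge0}^{(J)}\mid\mathbf{u}-\mathbf{v}\in L\}$. For $\mathcal{B}\subseteq L$: generating set = generates $L$ as a group; Markov basis = for every $\mathbf{u}$ the graph on $F_L(\mathbf{u})$ with edges $\{\mathbf{v},\mathbf{w}\}$ for $\mathbf{v}-\mathbf{w}\in\pm\mathcal{B}$ is connected; Gröbner basis w.r.t. $\prec$ = for every $\mathbf{u}$ there is a directed path from $\mathbf{u}$ to the $\prec$-minimal element of $F_L(\mathbf{u})$ in the graph on $F_L(\mathbf{u})$ with an edge from $\mathbf{v}$ to $\mathbf{w}$ whenever $\mathbf{v}-\mathbf{w}\in\pm\mathcal{B}$ and $\mathbf{w}\prec\mathbf{v}$; universal Gröbner basis = Gröbner basis w.r.t. every term order. The Graver basis is the set of $\sqsubseteq$-minimal elements of $L\setminus\{\mathbf{0}\}$. *)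

theory Defs
  imports Main "HOL-Library.Function_Algebras"
begin

text \<open>Vectors in Z^(J) are integer-valued functions on an ambient type 'j with finite
support contained in J.\<close>

definition supp :: "('j \<Rightarrow> int) \<Rightarrow> 'j set" where
  "supp u = {j. u j \<noteq> 0}"

definition ZJ :: "'j set \<Rightarrow> ('j \<Rightarrow> int) set" where
  "ZJ J = {u. finite (supp u) \<and> supp u \<subseteq> J}"

definition ZJ_nonneg :: "'j set \<Rightarrow> ('j \<Rightarrow> int) set" where
  "ZJ_nonneg J = {u \<in> ZJ J. \<forall>j. u j \<ge> 0}"

definition is_lattice :: "'j set \<Rightarrow> ('j \<Rightarrow> int) set \<Rightarrow> bool" where
  "is_lattice J L \<longleftrightarrow> L \<subseteq> ZJ J \<and> 0 \<in> L \<and> (\<forall>u\<in>L. \<forall>v\<in>L. u + v \<in> L) \<and> (\<forall>u\<in>L. - u \<in> L)"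

definition conformal :: "('j \<Rightarrow> int) \<Rightarrow> ('j \<Rightarrow> int) \<Rightarrow> bool" where
  "conformal u v \<longleftrightarrow> (\<forall>j. u j * v j \<ge> 0 \<and> \<bar>u j\<bar> \<le> \<bar>v j\<bar>)"

text \<open>Term order on Z_{\<ge>0}^(J), given as a strict relation: an additive well-ordering.\<close>
definition term_order :: "'j set \<Rightarrow> (('j \<Rightarrow> int) \<Rightarrow> ('j \<Rightarrow> int) \<Rightarrow> bool) \<Rightarrow> bool" where
  "term_order J ord \<longleftrightarrow>
     (\<forall>u\<in>ZJ_nonneg J. \<not> ord u u) \<and>
     (\<forall>u\<in>ZJ_nonneg J. \<forall>v\<in>ZJ_nonneg J. \<forall>w\<in>ZJ_nonneg J. ord u v \<longrightarrow> ord v w \<longrightarrow> ord u w) \<and>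
     (\<forall>u\<in>ZJ_nonneg J. \<forall>v\<in>ZJ_nonneg J. u \<noteq> v \<longrightarrow> ord u v \<or> ord v u) \<and>
     wf {(u, v). u \<in> ZJ_nonneg J \<and> v \<in> ZJ_nonneg J \<and> ord u v} \<and>
     (\<forall>u\<in>ZJ_nonneg J. \<forall>v\<in>ZJ_nonneg J. \<forall>w\<in>ZJ_nonneg J. ord u v \<longrightarrow> ord (u + w) (v + w))"

definition fiber :: "'j set \<Rightarrow> ('j \<Rightarrow> int) set \<Rightarrow> ('j \<Rightarrow> int) \<Rightarrow> ('j \<Rightarrow> int) set" where
  "fiber J L u = {v \<in> ZJ_nonneg J. u - v \<in> L}"

inductive_set gen_group :: "('j \<Rightarrow> int) set \<Rightarrow> ('j \<Rightarrow> int) set" for B where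
  zero: "0 \<in> gen_group B"
| add: "x \<in> gen_group B \<Longrightarrow> b \<in> B \<Longrightarrow> x + b \<in> gen_group B"
| sub: "x \<in> gen_group B \<Longrightarrow> b \<in> B \<Longrightarrow> x - b \<in> gen_group B"

definition generating_set :: "('j \<Rightarrow> int) set \<Rightarrow> ('j \<Rightarrow> int) set \<Rightarrow> bool" where
  "generating_set L B \<longleftrightarrow> B \<subseteq> L \<and> gen_group B = L"

definition markov_basis :: "'j set \<Rightarrow> ('j \<Rightarrow> int) set \<Rightarrow> ('j \<Rightarrow> int) set \<Rightarrow> bool" where
  "markov_basis J L B \<longleftrightarrow> B \<subseteq> L \<and>
     (\<forall>u\<in>ZJ_nonneg J. \<forall>v\<in>fiber J L u. \<forall>w\<in>fiber J L u.
        (v, w) \<in> {(x, y). x \<in> fiber J L u \<and> y \<in> fiber J L u \<and> (x - y \<in> B \<or> y - x \<in> B)}\<^sup>*)"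

definition groebner_basis :: "'j set \<Rightarrow> ('j \<Rightarrow> int) set \<Rightarrow> (('j \<Rightarrow> int) \<Rightarrow> ('j \<Rightarrow> int) \<Rightarrow> bool) \<Rightarrow> ('j \<Rightarrow> int) set \<Rightarrow> bool" where
  "groebner_basis J L ord B \<longleftrightarrow> B \<subseteq> L \<and>
     (\<forall>u\<in>ZJ_nonneg J. \<forall>m\<in>fiber J L u. (\<forall>v\<in>fiber J L u. \<not> ord v m) \<longrightarrow>
        (u, m) \<in> {(x, y). x \<in> fiber J L u \<and> y \<in> fiber J L u \<and> (x - y \<in> B \<or> y - x \<in> B) \<and> ord y x}\<^sup>*)"

definition universal_groebner_basis :: "'j set \<Rightarrow> ('j \<Rightarrow> int) set \<Rightarrow> ('j \<Rightarrow> int) set \<Rightarrow> bool" where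
  "universal_groebner_basis J L B \<longleftrightarrow> (\<forall>ord. term_order J ord \<longrightarrow> groebner_basis J L ord B)"

definition graver_basis :: "('j \<Rightarrow> int) set \<Rightarrow> ('j \<Rightarrow> int) set" where
  "graver_basis L = {g \<in> L. g \<noteq> 0 \<and> (\<forall>h\<in>L. h \<noteq> 0 \<longrightarrow> conformal h g \<longrightarrow> h = g)}"

text \<open>Index sets I = N^d \<times> [c] and I_n = [n]^d \<times> [c], with N^d as lists of length d.\<close>
definition idxI :: "nat \<Rightarrow> nat \<Rightarrow> (nat list \<times> nat) set" where
  "idxI d c = {(x, k). length x = d \<and> (\<forall>i\<in>set x. 1 \<le> i) \<and> 1 \<le> k \<and> k \<le> c}"

definition idxIn :: "nat \<Rightarrow> nat \<Rightarrow> nat \<Rightarrow> (nat list \<times> nat) set" where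
  "idxIn d c n = {(x, k). length x = d \<and> (\<forall>i\<in>set x. 1 \<le> i \<and> i \<le> n) \<and> 1 \<le> k \<and> k \<le> c}"

end

theory Submission
  imports Defs
begin

text \<open>A vector of Z^(I) has finite support, so it lies in Z^(I_n) for some n, and so do
any finitely many vectors at once. Moreover the fiber of L_n over u is exactly the part of the
fiber of L over u inside Z^(I_n). Hence the fiber points to be connected, by an arbitrary path
(Markov) or by a descending path to the minimum (Gr\<ouml>bner), all lie in one fiber of some L_n,
where B_n supplies the path. Membership in the Graver basis is local as well, because every
vector conformal to g is supported inside the support of g.\<close>

definition exhausts :: "'j set \<Rightarrow> 'n set \<Rightarrow> ('n \<Rightarrow> 'j set) \<Rightarrow> bool" where
  "exhausts J N A \<longleftrightarrow> (\<forall>n\<in>N. A n \<subseteq> J) \<and> (\<forall>F. finite F \<and> F \<subseteq> J \<longrightarrow> (\<exists>n\<in>N. F \<subseteq> A n))"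

definition fiber_graph ::
  "'j set \<Rightarrow> ('j \<Rightarrow> int) set \<Rightarrow> ('j \<Rightarrow> int) set \<Rightarrow> ('j \<Rightarrow> int) \<Rightarrow> (('j \<Rightarrow> int) \<times> ('j \<Rightarrow> int)) set"
  where "fiber_graph J L B u =
    {(x, y). x \<in> fiber J L u \<and> y \<in> fiber J L u \<and> (x - y \<in> B \<or> y - x \<in> B)}"

lemma markov_basis_iff_fiber_graph:
  "markov_basis J L B \<longleftrightarrow> B \<subseteq> L \<and>
     (\<forall>u\<in>ZJ_nonneg J. \<forall>v\<in>fiber J L u. \<forall>w\<in>fiber J L u. (v, w) \<in> (fiber_graph J L B u)\<^sup>*)"
  unfolding markov_basis_def fiber_graph_def ..

lemma groebner_basis_iff_fiber_graph:
  "groebner_basis J L ord B \<longleftrightarrow> B \<subseteq> L \<and>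
     (\<forall>u\<in>ZJ_nonneg J. \<forall>m\<in>fiber J L u. (\<forall>v\<in>fiber J L u. \<not> ord v m) \<longrightarrow>
        (u, m) \<in> (fiber_graph J L B u \<inter> {(x, y). ord y x})\<^sup>*)"
proof -
  have "fiber_graph J L B u \<inter> {(x, y). ord y x} =
      {(x, y). x \<in> fiber J L u \<and> y \<in> fiber J L u \<and> (x - y \<in> B \<or> y - x \<in> B) \<and> ord y x}" for u
    unfolding fiber_graph_def by blast
  then show ?thesis
    unfolding groebner_basis_def by simp
qed

lemma ZJ_mono: "K \<subseteq> J \<Longrightarrow> ZJ K \<subseteq> ZJ J"
  unfolding ZJ_def by auto

lemma ZJ_diff:
  assumes "u \<in> ZJ J" and "v \<in> ZJ J"
  shows "u - v \<in> ZJ J"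
proof -
  have "supp (u - v) \<subseteq> supp u \<union> supp v"
    unfolding supp_def by auto
  moreover have "finite (supp u \<union> supp v)" and "supp u \<union> supp v \<subseteq> J"
    using assms unfolding ZJ_def by auto
  ultimately show ?thesis
    unfolding ZJ_def using finite_subset by blast
qed

lemma ZJ_nonneg_restrict: "K \<subseteq> J \<Longrightarrow> ZJ_nonneg K = ZJ_nonneg J \<inter> ZJ K"
  unfolding ZJ_nonneg_def using ZJ_mono by blast

lemma fiber_restrict:
  assumes "K \<subseteq> J" and "u \<in> ZJ K"
  shows "fiber K (L \<inter> ZJ K) u = fiber J L u \<inter> ZJ K"
  using assms ZJ_diff unfolding fiber_def ZJ_nonneg_restrict[OF \<open>K \<subseteq> J\<close>] by blast

lemma fiber_graph_restrict_subset:
  assumes "K \<subseteq> J" and "u \<in> ZJ K" and "B' \<subseteq> B"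
  shows "fiber_graph K (L \<inter> ZJ K) B' u \<subseteq> fiber_graph J L B u"
  using assms unfolding fiber_graph_def fiber_restrict[OF assms(1,2)] by blast

lemma exhausts_ZJ:
  assumes "exhausts J N A" and "finite U" and "U \<subseteq> ZJ J"
  shows "\<exists>n\<in>N. U \<subseteq> ZJ (A n)"
proof -
  have "finite (\<Union>(supp ` U))" and "\<Union>(supp ` U) \<subseteq> J"
    using assms(2,3) unfolding ZJ_def by auto
  then obtain n where "n \<in> N" and "\<Union>(supp ` U) \<subseteq> A n"
    using assms(1) unfolding exhausts_def by blast
  then show ?thesis
    using assms(3) unfolding ZJ_def by blast
qed

lemma exhausts_idxIn: "exhausts (idxI d c) {1..} (idxIn d c)"
  unfolding exhausts_def
proof (intro conjI ballI allI impI)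
  show "idxIn d c n \<subseteq> idxI d c" for n
    unfolding idxIn_def idxI_def by auto
  fix F assume F: "finite F \<and> F \<subseteq> idxI d c"
  define n where "n = Max (insert 1 (\<Union>p\<in>F. set (fst p)))"
  have fin: "finite (insert 1 (\<Union>p\<in>F. set (fst p)))"
    using F by auto
  have "1 \<le> n" and "\<forall>p\<in>F. \<forall>i\<in>set (fst p). i \<le> n"
    unfolding n_def using Max_ge[OF fin] by auto
  then show "\<exists>n\<in>{1..}. F \<subseteq> idxIn d c n"
    using F unfolding idxI_def idxIn_def by (auto intro!: bexI[of _ n])
qed

lemma gen_group_mono: "A \<subseteq> B \<Longrightarrow> gen_group A \<subseteq> gen_group B"
proof
  show "x \<in> gen_group B" if "A \<subseteq> B" and "x \<in> gen_group A" for x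
    using that(2,1) by induction (auto intro: gen_group.intros)
qed

lemma gen_group_subset_lattice:
  assumes "is_lattice J L" and "B \<subseteq> L"
  shows "gen_group B \<subseteq> L"
proof
  show "x \<in> L" if "x \<in> gen_group B" for x
    using that
  proof induction
    case zero
    then show ?case
      using assms unfolding is_lattice_def by blast
  next
    case (add x b)
    then show ?case
      using assms unfolding is_lattice_def by blast
  next
    case (sub x b)
    then have "x + - b \<in> L"
      using assms unfolding is_lattice_def by blast
    then show ?case
      by (simp only: diff_conv_add_uminus)
  qed
qed

lemma generating_set_UN:
  assumes "is_lattice J L" and "exhausts J N A"
    and "\<And>n. n \<in> N \<Longrightarrow> generating_set (L \<inter> ZJ (A n)) (B n)"
  shows "generating_set L (\<Union>n\<in>N. B n)"
proof -
  have B_sub: "(\<Union>n\<in>N. B n) \<subseteq> L"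
    using assms(3) unfolding generating_set_def by blast
  have "L \<subseteq> gen_group (\<Union>n\<in>N. B n)"
  proof
    fix x assume "x \<in> L"
    moreover have "L \<subseteq> ZJ J"
      using assms(1) unfolding is_lattice_def by blast
    ultimately obtain n where "n \<in> N" and "x \<in> L \<inter> ZJ (A n)"
      using exhausts_ZJ[OF assms(2), of "{x}"] by auto
    then have "x \<in> gen_group (B n)"
      using assms(3) unfolding generating_set_def by blast
    then show "x \<in> gen_group (\<Union>n\<in>N. B n)"
      using gen_group_mono[of "B n" "\<Union>n\<in>N. B n"] \<open>n \<in> N\<close> by blast
  qed
  then show ?thesis
    using B_sub gen_group_subset_lattice[OF assms(1) B_sub] unfolding generating_set_def by blast
qed

lemma markov_basis_UN:
  assumes "exhausts J N A"
    and "\<And>n. n \<in> N \<Longrightarrow> markov_basis (A n) (L \<inter> ZJ (A n)) (B n)"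
  shows "markov_basis J L (\<Union>n\<in>N. B n)"
  unfolding markov_basis_iff_fiber_graph
proof (intro conjI ballI)
  show "(\<Union>n\<in>N. B n) \<subseteq> L"
    using assms(2) unfolding markov_basis_def by blast
  fix u v w assume u: "u \<in> ZJ_nonneg J" and v: "v \<in> fiber J L u" and w: "w \<in> fiber J L u"
  then have "{u, v, w} \<subseteq> ZJ J"
    unfolding fiber_def ZJ_nonneg_def by blast
  then obtain n where n: "n \<in> N" and uvw: "{u, v, w} \<subseteq> ZJ (A n)"
    using exhausts_ZJ[OF assms(1), of "{u, v, w}"] by auto
  have An: "A n \<subseteq> J"
    using assms(1) n unfolding exhausts_def by blast
  have "u \<in> ZJ_nonneg (A n)"
    using u uvw ZJ_nonneg_restrict[OF An] by blast
  moreover have "v \<in> fiber (A n) (L \<inter> ZJ (A n)) u" and "w \<in> fiber (A n) (L \<inter> ZJ (A n)) u"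
    using v w uvw fiber_restrict[OF An, of u L] by auto
  ultimately have "(v, w) \<in> (fiber_graph (A n) (L \<inter> ZJ (A n)) (B n) u)\<^sup>*"
    using assms(2)[OF n] unfolding markov_basis_iff_fiber_graph by blast
  moreover have "fiber_graph (A n) (L \<inter> ZJ (A n)) (B n) u \<subseteq> fiber_graph J L (\<Union>n\<in>N. B n) u"
    using fiber_graph_restrict_subset An uvw n by blast
  ultimately show "(v, w) \<in> (fiber_graph J L (\<Union>n\<in>N. B n) u)\<^sup>*"
    using rtrancl_mono by blast
qed

lemma groebner_basis_UN:
  assumes "exhausts J N A"
    and "\<And>n. n \<in> N \<Longrightarrow> groebner_basis (A n) (L \<inter> ZJ (A n)) ord (B n)"
  shows "groebner_basis J L ord (\<Union>n\<in>N. B n)"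
  unfolding groebner_basis_iff_fiber_graph
proof (intro conjI ballI impI)
  show "(\<Union>n\<in>N. B n) \<subseteq> L"
    using assms(2) unfolding groebner_basis_def by blast
  fix u m assume u: "u \<in> ZJ_nonneg J" and m: "m \<in> fiber J L u"
    and min: "\<forall>v\<in>fiber J L u. \<not> ord v m"
  then have "{u, m} \<subseteq> ZJ J"
    unfolding fiber_def ZJ_nonneg_def by blast
  then obtain n where n: "n \<in> N" and um: "{u, m} \<subseteq> ZJ (A n)"
    using exhausts_ZJ[OF assms(1), of "{u, m}"] by auto
  have An: "A n \<subseteq> J"
    using assms(1) n unfolding exhausts_def by blast
  have "u \<in> ZJ_nonneg (A n)"
    using u um ZJ_nonneg_restrict[OF An] by blast
  moreover have "m \<in> fiber (A n) (L \<inter> ZJ (A n)) u"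
    using m um fiber_restrict[OF An, of u L] by auto
  moreover have "\<forall>v\<in>fiber (A n) (L \<inter> ZJ (A n)) u. \<not> ord v m"
    using min um fiber_restrict[OF An, of u L] by auto
  ultimately have "(u, m) \<in> (fiber_graph (A n) (L \<inter> ZJ (A n)) (B n) u \<inter> {(x, y). ord y x})\<^sup>*"
    using assms(2)[OF n] unfolding groebner_basis_iff_fiber_graph by blast
  moreover have "fiber_graph (A n) (L \<inter> ZJ (A n)) (B n) u \<subseteq> fiber_graph J L (\<Union>n\<in>N. B n) u"
    using fiber_graph_restrict_subset An um n by blast
  ultimately show "(u, m) \<in> (fiber_graph J L (\<Union>n\<in>N. B n) u \<inter> {(x, y). ord y x})\<^sup>*"
    by (meson Int_mono order_refl rtrancl_mono subsetD)
qed

lemma term_order_restrict: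
  assumes "term_order J ord" and "K \<subseteq> J"
  shows "term_order K ord"
proof -
  have nonneg: "ZJ_nonneg K \<subseteq> ZJ_nonneg J"
    using ZJ_nonneg_restrict[OF assms(2)] by blast
  then have "{(u, v). u \<in> ZJ_nonneg K \<and> v \<in> ZJ_nonneg K \<and> ord u v}
      \<subseteq> {(u, v). u \<in> ZJ_nonneg J \<and> v \<in> ZJ_nonneg J \<and> ord u v}"
    by blast
  then have "wf {(u, v). u \<in> ZJ_nonneg K \<and> v \<in> ZJ_nonneg K \<and> ord u v}"
    using assms(1) wf_subset unfolding term_order_def by blast
  with assms(1) nonneg show ?thesis
    unfolding term_order_def by (meson subsetD)
qed

lemma universal_groebner_basis_UN:
  assumes "exhausts J N A"
    and "\<And>n. n \<in> N \<Longrightarrow> universal_groebner_basis (A n) (L \<inter> ZJ (A n)) (B n)"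
  shows "universal_groebner_basis J L (\<Union>n\<in>N. B n)"
  unfolding universal_groebner_basis_def
proof (intro allI impI)
  fix ord assume ord: "term_order J ord"
  have "groebner_basis (A n) (L \<inter> ZJ (A n)) ord (B n)" if "n \<in> N" for n
  proof -
    have "A n \<subseteq> J"
      using assms(1) that unfolding exhausts_def by blast
    then have "term_order (A n) ord"
      by (rule term_order_restrict[OF ord])
    then show ?thesis
      using assms(2)[OF that] unfolding universal_groebner_basis_def by blast
  qed
  then show "groebner_basis J L ord (\<Union>n\<in>N. B n)"
    by (rule groebner_basis_UN[OF assms(1)])
qed

lemma conformal_supp_subset: "conformal h g \<Longrightarrow> supp h \<subseteq> supp g"
  unfolding conformal_def supp_def by (auto, metis abs_0 abs_le_zero_iff)

lemma conformal_ZJ: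
  assumes "conformal h g" and "g \<in> ZJ K"
  shows "h \<in> ZJ K"
  using assms conformal_supp_subset[OF assms(1)] finite_subset unfolding ZJ_def by blast

lemma graver_basis_Int_ZJ: "graver_basis L \<inter> ZJ K = graver_basis (L \<inter> ZJ K)"
proof
  show "graver_basis L \<inter> ZJ K \<subseteq> graver_basis (L \<inter> ZJ K)"
    unfolding graver_basis_def by blast
  show "graver_basis (L \<inter> ZJ K) \<subseteq> graver_basis L \<inter> ZJ K"
    unfolding graver_basis_def using conformal_ZJ by blast
qed

lemma graver_basis_eq_UN:
  assumes "L \<subseteq> ZJ J" and "exhausts J N A"
  shows "graver_basis L = (\<Union>n\<in>N. graver_basis (L \<inter> ZJ (A n)))"
proof -
  have "graver_basis L \<subseteq> (\<Union>n\<in>N. ZJ (A n))"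
  proof
    fix g assume "g \<in> graver_basis L"
    then have "{g} \<subseteq> ZJ J"
      using assms(1) unfolding graver_basis_def by blast
    then show "g \<in> (\<Union>n\<in>N. ZJ (A n))"
      using exhausts_ZJ[OF assms(2), of "{g}"] by auto
  qed
  then have "graver_basis L = (\<Union>n\<in>N. graver_basis L \<inter> ZJ (A n))"
    by blast
  then show ?thesis
    by (simp only: graver_basis_Int_ZJ)
qed

theorem proposition2p7:
  fixes c d :: nat and L :: "(nat list \<times> nat \<Rightarrow> int) set"
  assumes "1 \<le> c" and "1 \<le> d"
    and "is_lattice (idxI d c) L"
  shows
   "(\<forall>B :: nat \<Rightarrow> (nat list \<times> nat \<Rightarrow> int) set.
       (\<forall>n\<ge>1. B n \<subseteq> L \<inter> ZJ (idxIn d c n) \<and> generating_set (L \<inter> ZJ (idxIn d c n)) (B n))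
       \<longrightarrow> generating_set L (\<Union>n\<in>{1..}. B n)) \<and>
    (\<forall>B :: nat \<Rightarrow> (nat list \<times> nat \<Rightarrow> int) set.
       (\<forall>n\<ge>1. B n \<subseteq> L \<inter> ZJ (idxIn d c n) \<and> markov_basis (idxIn d c n) (L \<inter> ZJ (idxIn d c n)) (B n))
       \<longrightarrow> markov_basis (idxI d c) L (\<Union>n\<in>{1..}. B n)) \<and>
    (\<forall>B :: nat \<Rightarrow> (nat list \<times> nat \<Rightarrow> int) set.
       (\<forall>n\<ge>1. B n \<subseteq> L \<inter> ZJ (idxIn d c n) \<and> universal_groebner_basis (idxIn d c n) (L \<inter> ZJ (idxIn d c n)) (B n))
       \<longrightarrow> universal_groebner_basis (idxI d c) L (\<Union>n\<in>{1..}. B n)) \<and>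
    (\<forall>B :: nat \<Rightarrow> (nat list \<times> nat \<Rightarrow> int) set.
       (\<forall>n\<ge>1. B n \<subseteq> L \<inter> ZJ (idxIn d c n) \<and> B n = graver_basis (L \<inter> ZJ (idxIn d c n)))
       \<longrightarrow> (\<Union>n\<in>{1..}. B n) = graver_basis L) \<and>
    (\<forall>ord B. term_order (idxI d c) ord \<longrightarrow>
       (\<forall>n\<ge>1. B n \<subseteq> L \<inter> ZJ (idxIn d c n) \<and> groebner_basis (idxIn d c n) (L \<inter> ZJ (idxIn d c n)) ord (B n))
       \<longrightarrow> groebner_basis (idxI d c) L ord (\<Union>n\<in>{1..}. B n)) \<and>
    (\<forall>n\<ge>1. graver_basis L \<inter> ZJ (idxIn d c n) = graver_basis (L \<inter> ZJ (idxIn d c n)))"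
proof -
  have exh: "exhausts (idxI d c) {1..} (idxIn d c)"
    by (rule exhausts_idxIn)
  have "L \<subseteq> ZJ (idxI d c)"
    using assms(3) unfolding is_lattice_def by blast
  note graver_UN = graver_basis_eq_UN[OF this exh]
  show ?thesis
  proof (intro conjI)
    show "\<forall>n\<ge>1. graver_basis L \<inter> ZJ (idxIn d c n) = graver_basis (L \<inter> ZJ (idxIn d c n))"
      using graver_basis_Int_ZJ by blast
  qed (use graver_UN generating_set_UN[OF assms(3) exh] markov_basis_UN[OF exh]
      universal_groebner_basis_UN[OF exh] groebner_basis_UN[OF exh] in auto)
qed

end
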